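(* Let $\alpha,\beta$ be sets, $z\in\beta$, $\mathit{seq}:\beta\times\alpha\to\beta$ and $\mathit{comb}:\beta\times\beta\to\beta$, written $x\oplus y=\mathit{comb}(x,y)$. Let $\Gamma=\{\mathrm{foldl}(\mathit{seq},z,L) : L \text{ a finite list over }\alpha\}$. Then calls $\mathrm{aggregate}(z,\mathit{seq},\mathit{comb},\mathit{rdd})$ have deterministic outcomes if and only if (1) $(\Gamma,\oplus,z)$ is a commutative monoid (i.e. $\oplus$ maps $\Gamma\times\Gamma$ into $\Gamma$, is associative and commutative on $\Gamma$, with identity $z$ on $\Gamma$), and (2) for all $d\in\alpha$ and $e\in\Gamma$, $\mathit{seq}(e,d)=e\oplus\mathit{seq}(z,d)$.
   Context: Lists are finite; $\mathbin{+\!\!+}$ is list concatenation. For $f:B\times A\to B$, $b\in B$: $\mathrm{foldl}(f,b,[\,])=b$ and $\mathrm{foldl}(f,b,[x_1,\dots,x_n])=f(\cdots f(f(b,x_1),x_2)\cdots,x_n)$. An RDD over $\alpha$ is a list of lists over $\alpha$. A partitioning is a function $P$ sending each list $L$ over $\alpha$ to an RDD obtained by splitting $L$ into consecutive (possibly empty) pieces $p_1,\dots,p_n$ with $p_1\mathbin{+\!\!+}\cdots\mathbin{+\!\!+}p_n=L$ and then arbitrarily permuting $[p_1,\dots,p_n]$. Define $\mathrm{aggregate}_{\mathrm{det}}(z,\mathit{seq},\mathit{comb},[q_1,\dots,q_m])=\mathrm{foldl}(\mathit{comb},z,[\mathrm{foldl}(\mathit{seq},z,q_1),\dots,\mathrm{foldl}(\mathit{seq},z,q_m)])$.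 Calls $\mathrm{aggregate}(z,\mathit{seq},\mathit{comb},\mathit{rdd})$ have deterministic outcomes if $\mathrm{aggregate}_{\mathrm{det}}(z,\mathit{seq},\mathit{comb},P(L))=\mathrm{foldl}(\mathit{seq},z,L)$ for all lists $L$ over $\alpha$ and all partitionings $P$. *)

theory Defs
  imports Main "HOL-Library.Multiset"
begin

definition is_partitioning :: "('a list \<Rightarrow> 'a list list) \<Rightarrow> bool" where
  "is_partitioning P \<longleftrightarrow>
     (\<forall>L. \<exists>ps. concat ps = L \<and> mset (P L) = mset ps)"

definition aggregate_det ::
  "'b \<Rightarrow> ('b \<Rightarrow> 'a \<Rightarrow> 'b) \<Rightarrow> ('b \<Rightarrow> 'b \<Rightarrow> 'b) \<Rightarrow> 'a list list \<Rightarrow> 'b" where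
  "aggregate_det z seq comb qs = foldl comb z (map (foldl seq z) qs)"

definition deterministic ::
  "'b \<Rightarrow> ('b \<Rightarrow> 'a \<Rightarrow> 'b) \<Rightarrow> ('b \<Rightarrow> 'b \<Rightarrow> 'b) \<Rightarrow> bool" where
  "deterministic z seq comb \<longleftrightarrow>
     (\<forall>P. is_partitioning P \<longrightarrow> (\<forall>L. aggregate_det z seq comb (P L) = foldl seq z L))"

definition Gamma :: "'b \<Rightarrow> ('b \<Rightarrow> 'a \<Rightarrow> 'b) \<Rightarrow> 'b set" where
  "Gamma z seq = {foldl seq z L | L. True}"

definition comm_monoid_on :: "'b set \<Rightarrow> ('b \<Rightarrow> 'b \<Rightarrow> 'b) \<Rightarrow> 'b \<Rightarrow> bool" where
  "comm_monoid_on G f e \<longleftrightarrow>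
     e \<in> G \<and>
     (\<forall>x\<in>G. \<forall>y\<in>G. f x y \<in> G) \<and>
     (\<forall>x\<in>G. \<forall>y\<in>G. \<forall>w\<in>G. f (f x y) w = f x (f y w)) \<and>
     (\<forall>x\<in>G. \<forall>y\<in>G. f x y = f y x) \<and>
     (\<forall>x\<in>G. f e x = x \<and> f x e = x)"

end

theory Submission
  imports Defs
begin

text \<open>Writing \<open>g = foldl seq z\<close>, determinism on the partitionings into one, two and two swapped
  pieces says exactly that \<open>comb (g A) (g B) = g (A @ B) = comb (g B) (g A)\<close>, i.e. that
  \<open>g\<close> is a homomorphism from lists under concatenation onto a commutative monoid on \<open>\<Gamma>\<close>;
  condition (2) is this homomorphism law for \<open>B = [d]\<close>. Conversely, (2) extends to the full
  homomorphism law by induction on \<open>B\<close>, and in a commutative monoid the fold of the piece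
  results does not depend on the order of the pieces.\<close>

lemma Gamma_iff: "x \<in> Gamma z seq \<longleftrightarrow> (\<exists>L. x = foldl seq z L)"
  by (simp add: Gamma_def)

lemma foldl_in_Gamma: "foldl seq z L \<in> Gamma z seq"
  by (auto simp: Gamma_iff)

lemma GammaE:
  assumes "x \<in> Gamma z seq"
  obtains L where "x = foldl seq z L"
  using assms by (auto simp: Gamma_iff)

lemma foldl_comm_monoid_on_closed:
  assumes "comm_monoid_on G f e" "a \<in> G" "set xs \<subseteq> G"
  shows "foldl f a xs \<in> G"
  using assms(2,3)
proof (induction xs arbitrary: a)
  case (Cons x xs)
  then show ?case using assms(1) by (simp add: comm_monoid_on_def)
qed simp

lemma foldl_comm_monoid_on_assoc:
  assumes "comm_monoid_on G f e" "a \<in> G" "set xs \<subseteq> G"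
  shows "foldl f a xs = f a (foldl f e xs)"
  using assms(2,3)
proof (induction xs arbitrary: a)
  case Nil
  then show ?case using assms(1) by (simp add: comm_monoid_on_def)
next
  case (Cons x xs)
  have x: "x \<in> G" and rest: "set xs \<subseteq> G" and ax: "f a x \<in> G"
    using Cons.prems assms(1) by (auto simp: comm_monoid_on_def)
  have "foldl f a (x # xs) = f (f a x) (foldl f e xs)"
    using Cons.IH[OF ax rest] by simp
  also have "\<dots> = f a (f x (foldl f e xs))"
    using assms(1) Cons.prems x foldl_comm_monoid_on_closed[OF assms(1) _ rest]
    by (simp add: comm_monoid_on_def)
  also have "f x (foldl f e xs) = foldl f e (x # xs)"
    using Cons.IH[OF x rest] assms(1) x by (simp add: comm_monoid_on_def)
  finally show ?case .
qed

lemma comm_monoid_on_left_commute: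
  assumes "comm_monoid_on G f e" "x \<in> G" "y \<in> G" "w \<in> G"
  shows "f x (f y w) = f y (f x w)"
proof -
  have assoc: "\<And>a b c. a \<in> G \<Longrightarrow> b \<in> G \<Longrightarrow> c \<in> G \<Longrightarrow> f (f a b) c = f a (f b c)"
    and comm: "\<And>a b. a \<in> G \<Longrightarrow> b \<in> G \<Longrightarrow> f a b = f b a"
    using assms(1) unfolding comm_monoid_on_def by blast+
  have "f x (f y w) = f (f x y) w"
    using assoc[OF assms(2-4)] by simp
  also have "\<dots> = f (f y x) w"
    using comm[OF assms(2,3)] by simp
  also have "\<dots> = f y (f x w)"
    using assoc[OF assms(3,2,4)] .
  finally show ?thesis .
qed

lemma foldl_comm_monoid_on_remove1:
  assumes "comm_monoid_on G f e" "set xs \<subseteq> G" "x \<in> set xs"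
  shows "foldl f e xs = f x (foldl f e (remove1 x xs))"
  using assms(2,3)
proof (induction xs)
  case (Cons y ys)
  have e: "e \<in> G" and unit: "f e y = y"
    using assms(1) Cons.prems by (auto simp: comm_monoid_on_def)
  have split: "foldl f e (y # zs) = f y (foldl f e zs)" if "set zs \<subseteq> G" for zs
    using foldl_comm_monoid_on_assoc[OF assms(1), of y zs] Cons.prems that unit by simp
  show ?case
  proof (cases "x = y")
    case True
    then show ?thesis using split Cons.prems by simp
  next
    case False
    then have x: "x \<in> set ys" using Cons.prems by simp
    have rest: "set (remove1 x ys) \<subseteq> G"
      using Cons.prems set_remove1_subset[of x ys] by auto
    have "foldl f e (y # ys) = f y (f x (foldl f e (remove1 x ys)))"
      using split Cons x by simp
    also have "\<dots> = f x (f y (foldl f e (remove1 x ys)))"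
      using comm_monoid_on_left_commute[OF assms(1)] Cons.prems x rest
        foldl_comm_monoid_on_closed[OF assms(1) e rest] by auto
    also have "f y (foldl f e (remove1 x ys)) = foldl f e (remove1 x (y # ys))"
      using False split[OF rest] by simp
    finally show ?thesis .
  qed
qed simp

lemma foldl_comm_monoid_on_mset_eq:
  assumes "comm_monoid_on G f e" "set xs \<subseteq> G" "mset xs = mset ys"
  shows "foldl f e xs = foldl f e ys"
  using assms(2,3)
proof (induction xs arbitrary: ys)
  case Nil
  then show ?case by simp
next
  case (Cons x xs)
  have "x \<in> set ys" "set ys \<subseteq> G"
    using Cons.prems mset_eq_setD[OF Cons.prems(2)] by auto
  moreover have "mset xs = mset (remove1 x ys)"
    using Cons.prems by (simp flip: Cons.prems(2))
  ultimately have "foldl f e xs = foldl f e (remove1 x ys)"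
    using Cons.IH[of "remove1 x ys"] Cons.prems(1) by simp
  moreover have "foldl f e (x # xs) = f x (foldl f e xs)"
    using assms(1) Cons.prems foldl_comm_monoid_on_assoc[OF assms(1), of x xs]
    by (simp add: comm_monoid_on_def)
  ultimately show ?case
    using foldl_comm_monoid_on_remove1[OF assms(1) \<open>set ys \<subseteq> G\<close> \<open>x \<in> set ys\<close>] by simp
qed

lemma deterministic_permuted_pieces:
  assumes "deterministic z seq comb" "mset qs = mset ps"
  shows "aggregate_det z seq comb qs = foldl seq z (concat ps)"
proof -
  define P where "P = (\<lambda>L. if L = concat ps then qs else [L])"
  have "is_partitioning P"
    unfolding is_partitioning_def P_def
  proof
    fix L
    show "\<exists>ps'. concat ps' = L \<and> mset (if L = concat ps then qs else [L]) = mset ps'"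
      using assms(2) by (cases "L = concat ps") auto
  qed
  then have "aggregate_det z seq comb (P (concat ps)) = foldl seq z (concat ps)"
    using assms(1) unfolding deterministic_def by blast
  then show ?thesis
    by (simp add: P_def)
qed

lemma deterministic_comb_foldl:
  assumes "deterministic z seq comb"
  shows "comb (foldl seq z A) (foldl seq z B) = foldl seq z (A @ B)"
    and "comb (foldl seq z B) (foldl seq z A) = foldl seq z (A @ B)"
proof -
  have left_unit: "comb z (foldl seq z A) = foldl seq z A" for A
    using deterministic_permuted_pieces[OF assms, of "[A]" "[A]"]
    by (simp add: aggregate_det_def)
  show "comb (foldl seq z A) (foldl seq z B) = foldl seq z (A @ B)"
    using deterministic_permuted_pieces[OF assms, of "[A, B]" "[A, B]"] left_unit
    by (simp add: aggregate_det_def del: foldl_append)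
  show "comb (foldl seq z B) (foldl seq z A) = foldl seq z (A @ B)"
    using deterministic_permuted_pieces[OF assms, of "[B, A]" "[A, B]"] left_unit
    by (simp add: aggregate_det_def del: foldl_append)
qed

lemma deterministic_imp_comm_monoid_on:
  assumes "deterministic z seq comb"
  shows "comm_monoid_on (Gamma z seq) comb z"
proof -
  let ?g = "foldl seq z"
  note hom = deterministic_comb_foldl[OF assms]
  have "z \<in> Gamma z seq"
    using foldl_in_Gamma[of seq z "[]"] by simp
  moreover have "comb (?g A) (?g B) \<in> Gamma z seq" for A B
    by (simp only: hom(1) foldl_in_Gamma)
  moreover have "comb (comb (?g A) (?g B)) (?g C) = comb (?g A) (comb (?g B) (?g C))" for A B C
    by (simp only: hom(1) append_assoc)
  moreover have "comb (?g A) (?g B) = comb (?g B) (?g A)" for A B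
    by (simp only: hom(1)[where A = A and B = B] hom(2)[where A = A and B = B])
  moreover have "comb z (?g A) = ?g A" "comb (?g A) z = ?g A" for A
    using hom(1)[of "[]" A] hom(1)[of A "[]"] by simp_all
  ultimately show ?thesis
    unfolding comm_monoid_on_def by (auto elim!: GammaE)
qed

lemma deterministic_imp_seq_comb:
  assumes "deterministic z seq comb" "e \<in> Gamma z seq"
  shows "seq e d = comb e (seq z d)"
  using assms(2) deterministic_comb_foldl(1)[OF assms(1), of _ "[d]"]
  by (auto simp: Gamma_iff)

lemma foldl_append_comb:
  assumes "comm_monoid_on (Gamma z seq) comb z"
    and "\<And>d e. e \<in> Gamma z seq \<Longrightarrow> seq e d = comb e (seq z d)"
  shows "foldl seq z (A @ B) = comb (foldl seq z A) (foldl seq z B)"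
proof (induction B rule: rev_induct)
  case Nil
  show ?case
    using assms(1) foldl_in_Gamma[of seq z A] unfolding comm_monoid_on_def by simp
next
  case (snoc d B)
  let ?g = "foldl seq z"
  have "?g ((A @ B) @ [d]) = seq (?g (A @ B)) d"
    by simp
  also have "\<dots> = comb (?g (A @ B)) (?g [d])"
    using assms(2)[OF foldl_in_Gamma[of seq z "A @ B"]] by (simp del: foldl_append)
  also have "\<dots> = comb (comb (?g A) (?g B)) (?g [d])"
    by (simp only: snoc.IH)
  also have "\<dots> = comb (?g A) (comb (?g B) (?g [d]))"
    using assms(1) foldl_in_Gamma[of seq z A] foldl_in_Gamma[of seq z B]
      foldl_in_Gamma[of seq z "[d]"]
    unfolding comm_monoid_on_def by blast
  also have "comb (?g B) (?g [d]) = ?g (B @ [d])"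
    using assms(2)[OF foldl_in_Gamma] by simp
  finally show ?case by simp
qed

lemma aggregate_det_concat:
  assumes "\<And>A B. comb (foldl seq z A) (foldl seq z B) = foldl seq z (A @ B)"
  shows "aggregate_det z seq comb ps = foldl seq z (concat ps)"
proof (induction ps rule: rev_induct)
  case (snoc p ps)
  have "aggregate_det z seq comb (ps @ [p]) = comb (aggregate_det z seq comb ps) (foldl seq z p)"
    by (simp add: aggregate_det_def)
  then show ?case
    using snoc assms by simp
qed (simp add: aggregate_det_def)

lemma comm_monoid_on_imp_deterministic:
  fixes z :: 'b and seq :: "'b \<Rightarrow> 'a \<Rightarrow> 'b"
  assumes monoid: "comm_monoid_on (Gamma z seq) comb z"
    and "\<And>d e. e \<in> Gamma z seq \<Longrightarrow> seq e d = comb e (seq z d)"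
  shows "deterministic z seq comb"
  unfolding deterministic_def is_partitioning_def
proof (intro allI impI)
  fix P :: "'a list \<Rightarrow> 'a list list" and L
  assume "\<forall>L. \<exists>ps. concat ps = L \<and> mset (P L) = mset ps"
  then obtain ps where ps: "concat ps = L" "mset (P L) = mset ps" by blast
  have "aggregate_det z seq comb (P L) = foldl comb z (map (foldl seq z) ps)"
    unfolding aggregate_det_def
    by (rule foldl_comm_monoid_on_mset_eq[OF monoid]) (auto simp: foldl_in_Gamma ps(2))
  also have "\<dots> = foldl seq z L"
    using aggregate_det_concat[of comb seq z ps] foldl_append_comb[OF assms] ps(1)
    by (simp add: aggregate_det_def)
  finally show "aggregate_det z seq comb (P L) = foldl seq z L" .
qed

theorem corollary1:
  fixes z :: 'b and seq :: "'b \<Rightarrow> 'a \<Rightarrow> 'b" and comb :: "'b \<Rightarrow> 'b \<Rightarrow> 'b"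
  shows "deterministic z seq comb \<longleftrightarrow>
           (comm_monoid_on (Gamma z seq) comb z \<and>
            (\<forall>d. \<forall>e\<in>Gamma z seq. seq e d = comb e (seq z d)))"
proof
  assume "deterministic z seq comb"
  then show "comm_monoid_on (Gamma z seq) comb z \<and>
      (\<forall>d. \<forall>e\<in>Gamma z seq. seq e d = comb e (seq z d))"
    by (simp add: deterministic_imp_comm_monoid_on deterministic_imp_seq_comb)
next
  assume "comm_monoid_on (Gamma z seq) comb z \<and>
      (\<forall>d. \<forall>e\<in>Gamma z seq. seq e d = comb e (seq z d))"
  then show "deterministic z seq comb"
    by (simp add: comm_monoid_on_imp_deterministic)
qed

end
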